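(* Let $3\le h\le n-1$. The distance characteristic polynomial of $K^{h}_{n}$ is $$P_D(\lambda)=(\lambda+1)^{h-2}(\lambda+2)^{n-h-1}\bigl[\lambda^{3}+(h+4-2n)\lambda^{2}+(5-2h-2nh+2h^{2}-n)\lambda-nh+h^{2}-2h+2\bigr].$$ Moreover, if $\lambda_1\ge\lambda_2\ge\cdots\ge\lambda_n$ is the distance spectrum of $K^{h}_{n}$, then $\lambda_1>0$, $-1<\lambda_2<-\frac12$, $\lambda_3=-1$, $\lambda_{n-1}\in\{-1,-2\}$ and $\lambda_n<-2$.
   Context: For a connected graph $G$, the distance matrix $D(G)$ has as $(i,j)$-entry the distance between the $i$-th and $j$-th vertices; the distance characteristic polynomial is $P_D(\lambda)=\det(\lambda I-D(G))$ and the distance spectrum consists of the eigenvalues of $D(G)$. $K^{h}_{n}$ denotes the graph on $n$ vertices obtained from the complete graph $K_h$ by attaching $n-h$ pendant edges to one vertex of $K_h$. *)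

theory Defs
  imports "Jordan_Normal_Form.Determinant" "Jordan_Normal_Form.Char_Poly"
begin

(* Graphs on vertex set {0..<n} given by a symmetric irreflexive edge relation. *)

fun walk :: "(nat \<Rightarrow> nat \<Rightarrow> bool) \<Rightarrow> nat \<Rightarrow> nat \<Rightarrow> nat \<Rightarrow> bool" where
  "walk E u v 0 = (u = v)"
| "walk E u v (Suc k) = (\<exists>w. E u w \<and> walk E w v k)"

(* graph distance: length of a shortest walk (graph assumed connected) *)
definition gdist :: "(nat \<Rightarrow> nat \<Rightarrow> bool) \<Rightarrow> nat \<Rightarrow> nat \<Rightarrow> nat" where
  "gdist E u v = (LEAST k. walk E u v k)"

definition dist_matrix :: "nat \<Rightarrow> (nat \<Rightarrow> nat \<Rightarrow> bool) \<Rightarrow> real mat" where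
  "dist_matrix n E = mat n n (\<lambda>(i, j). real (gdist E i j))"

(* K^h_n: complete graph K_h on vertices 0..h-1, plus n-h pendant vertices
   h..n-1 each joined to vertex 0 *)
definition Khn_edge :: "nat \<Rightarrow> nat \<Rightarrow> nat \<Rightarrow> nat \<Rightarrow> bool" where
  "Khn_edge n h i j \<longleftrightarrow> i \<noteq> j \<and> i < n \<and> j < n \<and>
     ((i < h \<and> j < h) \<or> (i = 0 \<and> h \<le> j) \<or> (j = 0 \<and> h \<le> i))"

definition dist_char_poly :: "nat \<Rightarrow> (nat \<Rightarrow> nat \<Rightarrow> bool) \<Rightarrow> real poly" where
  "dist_char_poly n E = char_poly (dist_matrix n E)"

definition is_dist_spectrum :: "nat \<Rightarrow> (nat \<Rightarrow> nat \<Rightarrow> bool) \<Rightarrow> real list \<Rightarrow> bool" where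
  "is_dist_spectrum n E ls \<longleftrightarrow> length ls = n \<and> sorted_wrt (\<ge>) ls \<and>
     dist_char_poly n E = (\<Prod>l\<leftarrow>ls. [:- l, 1:])"

end

theory Submission
  imports Defs
begin

text \<open>
  Apart from the centre 0, the vertices of \<open>K\<^sup>h\<^sub>n\<close> fall into the \<open>h - 1\<close> other clique
  vertices and the \<open>n - h\<close> pendant vertices, and the distance between two distinct vertices
  depends only on their classes. Hence \<open>\<lambda>I - D\<close> is a diagonal matrix plus a matrix of rank
  at most 3 that is constant on class blocks; the Weinstein--Aronszajn identity
  \<open>det (I + U W) = det (I + W U)\<close> reduces its determinant to that of a \<open>3 \<times> 3\<close> quotient matrix,
  which produces the cubic factor. The cubic is positive at \<open>-2\<close> and \<open>-1\<close> and negative at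
  \<open>-1/2\<close> and \<open>0\<close>, which locates its three real roots. Finally a polynomial determines the
  non-increasing list of its roots, so the spectrum can be read off the factorisation.
\<close>

section \<open>Determinants\<close>

lemma det_one_plus_mult_comm:
  fixes A :: "'a :: idom mat"
  assumes A: "A \<in> carrier_mat n m" and B: "B \<in> carrier_mat m n"
  shows "det (1\<^sub>m n + A * B) = det (1\<^sub>m m + B * A)"
proof -
  define M where "M = four_block_mat (1\<^sub>m m) (-B) A (1\<^sub>m n)"
  define P where "P = four_block_mat (1\<^sub>m m) B (0\<^sub>m n m) (1\<^sub>m n)"
  have M: "M \<in> carrier_mat (m + n) (m + n)" unfolding M_def using A B by auto
  have P: "P \<in> carrier_mat (m + n) (m + n)" unfolding P_def using A B by auto
  have det_P: "det P = 1" unfolding P_def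
    by (subst det_four_block_mat_lower_left_zero[of _ m _ n]) (use B in auto)
  have "M * P = four_block_mat (1\<^sub>m m) (0\<^sub>m m n) A (A * B + 1\<^sub>m n)"
    unfolding M_def P_def by (subst mult_four_block_mat) (use A B in auto)
  then have "det (M * P) = det (A * B + 1\<^sub>m n)"
    by (simp, subst det_four_block_mat_upper_right_zero[of _ m _ n]) (use A B in auto)
  moreover have "A * B + 1\<^sub>m n = 1\<^sub>m n + A * B"
    by (rule comm_add_mat[of _ n n]) (use A B in auto)
  ultimately have left: "det M = det (1\<^sub>m n + A * B)"
    using det_mult[OF M P] det_P by simp
  have "P * M = four_block_mat (1\<^sub>m m + B * A) (0\<^sub>m m n) A (1\<^sub>m n)"
    unfolding M_def P_def by (subst mult_four_block_mat) (use A B in auto)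
  then have "det (P * M) = det (1\<^sub>m m + B * A)"
    by (simp, subst det_four_block_mat_upper_right_zero[of _ m _ n]) (use A B in auto)
  then have right: "det M = det (1\<^sub>m m + B * A)"
    using det_mult[OF P M] det_P by simp
  show ?thesis using left right by simp
qed

lemma det_scale_rows:
  assumes M: "M \<in> carrier_mat n n"
  shows "det (mat n n (\<lambda>(i, j). c i * M $$ (i, j))) = prod c {0..<n} * det M"
proof -
  have "mat n n (\<lambda>(i, j). c i * M $$ (i, j)) = mat\<^sub>r n n (\<lambda>i. c i \<cdot>\<^sub>v row M i)"
    by (rule eq_matI) (use M in auto)
  moreover have "M = mat\<^sub>r n n (row M)"
    by (rule eq_matI) (use M in auto)
  ultimately show ?thesis
    using det_rows_mul[of "row M" n c] M by auto
qed

text \<open>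
  The matrix factors as \<open>diag (d \<circ> cls) * (I + U W)\<close> with \<open>U\<close> the \<open>n \<times> k\<close> class indicator
  matrix, and \<open>I + W U\<close> is the \<open>k \<times> k\<close> quotient matrix with its rows divided by \<open>d\<close>.
\<close>

lemma det_diag_plus_block_constant:
  fixes d :: "nat \<Rightarrow> 'a :: field" and K :: "nat \<Rightarrow> nat \<Rightarrow> 'a"
  assumes cls: "\<And>i. i < n \<Longrightarrow> cls i < k" and d: "\<And>c. c < k \<Longrightarrow> d c \<noteq> 0"
  shows "det (mat n n (\<lambda>(i, j). (if i = j then d (cls i) else 0) + K (cls i) (cls j)))
           * prod d {0..<k}
       = prod (d \<circ> cls) {0..<n}
           * det (mat k k (\<lambda>(c, e). (if c = e then d c else 0)
                                    + K c e * of_nat (card {j. j < n \<and> cls j = e})))"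
proof -
  define U where "U = mat n k (\<lambda>(i, c). if cls i = c then 1 else (0 :: 'a))"
  define W where "W = mat k n (\<lambda>(c, j). K c (cls j) / d c)"
  have U: "U \<in> carrier_mat n k" and W: "W \<in> carrier_mat k n"
    unfolding U_def W_def by auto
  have UW: "(U * W) $$ (i, j) = K (cls i) (cls j) / d (cls i)" if "i < n" "j < n" for i j
  proof -
    have "(U * W) $$ (i, j) = (\<Sum>c\<in>{0..<k}. (if cls i = c then 1 else 0) * W $$ (c, j))"
      using that U W by (simp add: scalar_prod_def U_def)
    also have "\<dots> = (\<Sum>c\<in>{0..<k}. if c = cls i then W $$ (cls i, j) else 0)"
      by (rule sum.cong) auto
    also have "\<dots> = W $$ (cls i, j)"
      using cls[OF \<open>i < n\<close>] by simp
    finally show ?thesis using that cls by (simp add: W_def)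
  qed
  have WU: "(W * U) $$ (c, e) = K c e * of_nat (card {j. j < n \<and> cls j = e}) / d c"
    if "c < k" "e < k" for c e
  proof -
    have "(W * U) $$ (c, e) = (\<Sum>j\<in>{0..<n}. K c (cls j) / d c * (if cls j = e then 1 else 0))"
      using that U W by (simp add: scalar_prod_def U_def W_def)
    also have "\<dots> = (\<Sum>j\<in>{j. j < n \<and> cls j = e}. K c e / d c)"
      by (simp add: sum.inter_filter[symmetric] if_distrib[of "\<lambda>x. _ * x"] atLeast0LessThan
          cong: if_cong)
    finally show ?thesis by simp
  qed
  have "mat n n (\<lambda>(i, j). (if i = j then d (cls i) else 0) + K (cls i) (cls j))
      = mat n n (\<lambda>(i, j). d (cls i) * (1\<^sub>m n + U * W) $$ (i, j))"
    by (rule eq_matI) (use U W UW cls d in \<open>auto simp: field_simps\<close>)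
  then have left: "det (mat n n (\<lambda>(i, j). (if i = j then d (cls i) else 0) + K (cls i) (cls j)))
      = prod (d \<circ> cls) {0..<n} * det (1\<^sub>m k + W * U)"
    using det_scale_rows[of "1\<^sub>m n + U * W" n "d \<circ> cls"] det_one_plus_mult_comm[OF U W] U W
    by (simp add: comp_def)
  have "mat k k (\<lambda>(c, e). (if c = e then d c else 0) + K c e * of_nat (card {j. j < n \<and> cls j = e}))
      = mat k k (\<lambda>(c, e). d c * (1\<^sub>m k + W * U) $$ (c, e))"
    by (rule eq_matI) (use U W WU d in \<open>auto simp: field_simps\<close>)
  then have right: "det (mat k k (\<lambda>(c, e). (if c = e then d c else 0)
                                    + K c e * of_nat (card {j. j < n \<and> cls j = e})))
      = prod d {0..<k} * det (1\<^sub>m k + W * U)"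
    using det_scale_rows[of "1\<^sub>m k + W * U" k d] U W by simp
  show ?thesis unfolding left right by (simp add: ac_simps)
qed

lemma mat_delete_mat:
  "mat_delete (mat (Suc k) (Suc k) f) i j =
     mat k k (\<lambda>(a, b). f (if a < i then a else Suc a, if b < j then b else Suc b))"
  unfolding mat_delete_def by (rule eq_matI) auto

lemma det_mat_1: "det (mat 1 1 f) = f (0, 0)"
  by (subst laplace_expansion_column[of _ 1 0]) (auto simp: cofactor_def mat_delete_mat)

lemma det_mat_2: "det (mat 2 2 f) = f (0, 0) * f (1, 1) - f (0, 1) * f (1, 0)"
  apply (subst laplace_expansion_column[of _ 2 0], simp, simp)
  apply (simp add: cofactor_def numeral_2_eq_2 lessThan_Suc mat_delete_mat del: One_nat_def)
  apply (simp add: det_mat_1[unfolded One_nat_def])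
  done

lemma det_mat_3:
  "det (mat 3 3 f) = f (0, 0) * (f (1, 1) * f (2, 2) - f (1, 2) * f (2, 1))
    - f (1, 0) * (f (0, 1) * f (2, 2) - f (0, 2) * f (2, 1))
    + f (2, 0) * (f (0, 1) * f (1, 2) - f (0, 2) * f (1, 1))"
  apply (subst laplace_expansion_column[of _ 3 0], simp, simp)
  apply (simp add: cofactor_def numeral_3_eq_3 lessThan_Suc mat_delete_mat del: One_nat_def)
  apply (simp add: det_mat_2[unfolded numeral_2_eq_2])
  apply (simp add: numeral_2_eq_2 algebra_simps)
  done

lemma poly_char_poly_eq_det:
  assumes "A \<in> carrier_mat n n"
  shows "poly (char_poly A) x = det (mat n n (\<lambda>(i, j). (if i = j then x else 0) - A $$ (i, j)))"
  unfolding char_poly_def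
  by (rule poly_det_cong[of _ n]) (use assms in \<open>auto simp: char_poly_matrix_def\<close>)

lemma poly_eq_if_eq_off_finite:
  fixes p q :: "'a :: {idom, ring_char_0} poly"
  assumes "finite F" and "\<And>x. x \<notin> F \<Longrightarrow> poly p x = poly q x"
  shows "p = q"
proof (rule ccontr)
  assume "p \<noteq> q"
  then have "finite {x. poly (p - q) x = 0}" by (intro poly_roots_finite) simp
  moreover have "UNIV - F \<subseteq> {x. poly (p - q) x = 0}" using assms(2) by auto
  ultimately have "finite (UNIV - F)" by (rule finite_subset[rotated])
  then show False using assms(1) infinite_UNIV_char_0 by (metis Diff_infinite_finite)
qed

section \<open>Distances\<close>

lemma gdist_self: "gdist E u u = 0"
  unfolding gdist_def by (simp add: Least_eq_0)

lemma gdist_edge: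
  assumes "u \<noteq> v" and "E u v"
  shows "gdist E u v = 1"
  unfolding gdist_def
proof (rule Least_equality)
  show "walk E u v 1" using assms by simp
  show "1 \<le> k" if "walk E u v k" for k using that assms by (cases k) auto
qed

lemma gdist_common_neighbour:
  assumes "u \<noteq> v" and "\<not> E u v" and "E u w" and "E w v"
  shows "gdist E u v = 2"
  unfolding gdist_def
proof (rule Least_equality)
  show "walk E u v 2" using assms by (auto simp: numeral_2_eq_2)
  show "2 \<le> k" if "walk E u v k" for k
    using that assms by (cases k; cases "k - 1") auto
qed

text \<open>
  Vertex classes of \<open>K\<^sup>h\<^sub>n\<close>: 0 for the clique vertices other than the centre, 1 for the
  pendant vertices, 2 for the centre 0. The value of \<open>Khn_class_dist\<close> on equal classes is
  arbitrary for the distance matrix; it is chosen so that the diagonal of the quotient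
  matrix below becomes \<open>\<lambda> + 1, \<lambda> + 2, \<lambda>\<close>.
\<close>

definition Khn_class :: "nat \<Rightarrow> nat \<Rightarrow> nat" where
  "Khn_class h i = (if i = 0 then 2 else if i < h then 0 else 1)"

definition Khn_class_dist :: "nat \<Rightarrow> nat \<Rightarrow> real" where
  "Khn_class_dist c e =
     (if c = 2 \<and> e = 2 then 0 else if c = 2 \<or> e = 2 then 1 else if c = 0 \<and> e = 0 then 1 else 2)"

lemma card_Khn_class:
  assumes "0 < h" and "h \<le> n"
  shows "card {j. j < n \<and> Khn_class h j = c} =
           (if c = 0 then h - 1 else if c = 1 then n - h else if c = 2 then 1 else 0)"
proof -
  have "{j. j < n \<and> Khn_class h j = c} =
          (if c = 0 then {1..<h} else if c = 1 then {h..<n} else if c = 2 then {0} else {})"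
    using assms unfolding Khn_class_def by auto
  then show ?thesis by simp
qed

lemma gdist_Khn:
  assumes "0 < h" and "i < n" and "j < n"
  shows "real (gdist (Khn_edge n h) i j) =
           (if i = j then 0 else Khn_class_dist (Khn_class h i) (Khn_class h j))"
proof -
  have edge: "Khn_edge n h a b \<longleftrightarrow> a \<noteq> b \<and> (a = 0 \<or> b = 0 \<or> (a < h \<and> b < h))"
    if "a < n" "b < n" for a b
    using that assms(1) unfolding Khn_edge_def by auto
  consider "i = j" | "i \<noteq> j" "Khn_edge n h i j" | "i \<noteq> j" "\<not> Khn_edge n h i j" by blast
  then show ?thesis
  proof cases
    case 1
    then show ?thesis by (simp add: gdist_self)
  next
    case 2
    then show ?thesis
      using edge[OF assms(2,3)] by (auto simp: gdist_edge Khn_class_dist_def Khn_class_def)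
  next
    case 3
    have "Khn_edge n h i 0" "Khn_edge n h 0 j"
      using 3 edge[OF assms(2,3)] edge[of i 0] edge[of 0 j] assms by auto
    with 3 show ?thesis
      using edge[OF assms(2,3)] gdist_common_neighbour[of i j "Khn_edge n h" 0]
      by (simp add: Khn_class_dist_def Khn_class_def)
  qed
qed

section \<open>The distance characteristic polynomial\<close>

definition Khn_cubic :: "nat \<Rightarrow> nat \<Rightarrow> real poly" where
  "Khn_cubic n h =
     [: - real n * real h + (real h)^2 - 2 * real h + 2,
        5 - 2 * real h - 2 * real n * real h + 2 * (real h)^2 - real n,
        real h + 4 - 2 * real n,
        1 :]"

lemma prod_Khn_class:
  assumes "0 < h" and "h \<le> n"
  shows "prod (f \<circ> Khn_class h) {0..<n} = f 2 * f 0 ^ (h - 1) * f 1 ^ (n - h)"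
proof -
  have "{0..<n} = insert 0 ({1..<h} \<union> {h..<n})" using assms by auto
  then have "prod (f \<circ> Khn_class h) {0..<n} =
      f (Khn_class h 0) * (prod (f \<circ> Khn_class h) {1..<h} * prod (f \<circ> Khn_class h) {h..<n})"
    using assms by (simp add: prod.union_disjoint)
  also have "prod (f \<circ> Khn_class h) {1..<h} = prod (\<lambda>_. f 0) {1..<h}"
    by (intro prod.cong) (auto simp: Khn_class_def)
  also have "prod (f \<circ> Khn_class h) {h..<n} = prod (\<lambda>_. f 1) {h..<n}"
    using assms by (intro prod.cong) (auto simp: Khn_class_def)
  finally show ?thesis by (simp add: Khn_class_def mult.assoc)
qed

lemma det_Khn_quotient:
  assumes "3 \<le> h" and "h < n"
  shows "det (mat 3 3 (\<lambda>(c, e). (if c = e then x + Khn_class_dist c c else 0)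
            - Khn_class_dist c e * of_nat (card {j. j < n \<and> Khn_class h j = e})))
         = poly (Khn_cubic n h) x"
  using assms
  by (simp add: det_mat_3 card_Khn_class Khn_class_dist_def Khn_cubic_def of_nat_diff
      algebra_simps power2_eq_square power3_eq_cube)

lemma poly_dist_char_poly_Khn:
  fixes x :: real
  assumes h: "3 \<le> h" "h < n" and x: "x \<noteq> 0" "x \<noteq> -1" "x \<noteq> -2"
  shows "poly (dist_char_poly n (Khn_edge n h)) x =
           (x + 1) ^ (h - 2) * (x + 2) ^ (n - h - 1) * poly (Khn_cubic n h) x"
proof -
  let ?cls = "Khn_class h" and ?K = "\<lambda>c e. - Khn_class_dist c e"
  define d where "d c = x + Khn_class_dist c c" for c
  have cls: "?cls i < 3" for i by (simp add: Khn_class_def)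
  have d_nz: "d c \<noteq> 0" if "c < 3" for c
    using that x by (auto simp: d_def Khn_class_dist_def numeral_3_eq_3 less_Suc_eq)
  have "poly (dist_char_poly n (Khn_edge n h)) x =
      det (mat n n (\<lambda>(i, j). (if i = j then d (?cls i) else 0) + ?K (?cls i) (?cls j)))"
    unfolding dist_char_poly_def
    by (subst poly_char_poly_eq_det[of _ n], simp add: dist_matrix_def, rule arg_cong[of _ _ det])
      (rule eq_matI, use h in \<open>auto simp: dist_matrix_def gdist_Khn d_def\<close>)
  then have "poly (dist_char_poly n (Khn_edge n h)) x * prod d {0..<3} =
      prod (d \<circ> ?cls) {0..<n} * poly (Khn_cubic n h) x"
    using det_diag_plus_block_constant[of n ?cls 3 d ?K] cls d_nz
      det_Khn_quotient[OF h, where x = x, folded d_def]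
    by simp
  moreover have "prod d {0..<3} = x * (x + 1) * (x + 2)"
    by (simp add: numeral_3_eq_3 d_def Khn_class_dist_def)
  moreover have "prod (d \<circ> ?cls) {0..<n} = x * (x + 1) ^ (h - 1) * (x + 2) ^ (n - h)"
    using h by (subst prod_Khn_class) (simp_all add: d_def Khn_class_dist_def)
  moreover have "h - 1 = Suc (h - 2)" and "n - h = Suc (n - h - 1)"
    using h by simp_all
  ultimately show ?thesis
    using x by (simp add: add_eq_0_iff mult_ac)
qed

lemma dist_char_poly_Khn:
  assumes "3 \<le> h" and "h < n"
  shows "dist_char_poly n (Khn_edge n h) =
           [:1, 1:] ^ (h - 2) * [:2, 1:] ^ (n - h - 1) * Khn_cubic n h"
  by (rule poly_eq_if_eq_off_finite[of "{0, -1, -2}"])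
    (use assms in \<open>auto simp: poly_dist_char_poly_Khn add.commute\<close>)

section \<open>Roots of the cubic factor\<close>

lemma monic_quadratic_factor_neg_const:
  fixes b0 b1 :: real
  assumes "b0 < 0"
  shows "\<exists>r s. [:b0, b1, 1:] = [:-r, 1:] * [:-s, 1:] \<and> 0 < r \<and> s < 0"
proof -
  define D where "D = b1\<^sup>2 - 4 * b0"
  define t where "t = sqrt D"
  have "b1\<^sup>2 < D" unfolding D_def using assms by simp
  then have t_gt: "\<bar>b1\<bar> < t"
    unfolding t_def using real_sqrt_less_mono[of "b1\<^sup>2" D] by simp
  have t_sq: "t\<^sup>2 = D"
  proof -
    have "0 \<le> D" using \<open>b1\<^sup>2 < D\<close> zero_le_power2[of b1] by linarith
    then show ?thesis unfolding t_def by simp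
  qed
  define r where "r = (- b1 + t) / 2"
  define s where "s = (- b1 - t) / 2"
  have "b0 = r * s" and "b1 = - r - s"
    unfolding r_def s_def using t_sq by (simp_all add: D_def field_simps power2_eq_square)
  then have "[:b0, b1, 1:] = [:-r, 1:] * [:-s, 1:]" by (simp add: algebra_simps)
  moreover have "0 < r" and "s < 0" unfolding r_def s_def using t_gt by auto
  ultimately show ?thesis by blast
qed

text \<open>
  The root in \<open>(b, c)\<close> splits off a monic quadratic factor that is negative at 0, hence has a
  positive and a negative root; the sign of \<open>p\<close> at \<open>a\<close> puts the negative one below \<open>a\<close>.
\<close>

lemma monic_cubic_factor_by_signs:
  fixes a b c c0 c1 c2 :: real
  defines "p \<equiv> [:c0, c1, c2, 1:]"
  assumes "a < b" and "b < c" and "c \<le> 0"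
    and "0 < poly p a" and "0 < poly p b" and "poly p c < 0" and "poly p 0 < 0"
  shows "\<exists>r1 r2 r3. p = [:-r1, 1:] * [:-r2, 1:] * [:-r3, 1:] \<and>
           0 < r1 \<and> b < r2 \<and> r2 < c \<and> r3 < a"
proof -
  obtain r2 where r2: "b < r2" "r2 < c" "poly p r2 = 0"
    using poly_IVT_neg[of b c p] assms by auto
  define b1 where "b1 = c2 + r2"
  define b0 where "b0 = c1 + r2 * b1"
  have c0: "c0 = - r2 * b0"
    using r2(3) unfolding p_def b0_def b1_def by (simp add: algebra_simps)
  have p_factor: "p = [:-r2, 1:] * [:b0, b1, 1:]"
    unfolding p_def by (simp add: c0 b0_def b1_def algebra_simps)
  have "0 < r2 * b0" using \<open>poly p 0 < 0\<close> c0 unfolding p_def by simp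
  then have "b0 < 0" using r2 assms(4) by (auto simp: zero_less_mult_iff)
  then obtain r1 r3 where q: "[:b0, b1, 1:] = [:-r1, 1:] * [:-r3, 1:]" and "0 < r1" "r3 < 0"
    using monic_quadratic_factor_neg_const by blast
  have "poly p a = (a - r2) * ((a - r1) * (a - r3))"
    unfolding p_factor q by (simp add: algebra_simps)
  moreover have "a - r2 < 0" and "a - r1 < 0"
    using r2 \<open>0 < r1\<close> assms(2-4) by auto
  ultimately have "r3 < a"
    using \<open>0 < poly p a\<close> by (auto simp: zero_less_mult_iff mult_less_0_iff)
  moreover have "p = [:-r1, 1:] * [:-r2, 1:] * [:-r3, 1:]"
    unfolding p_factor q by (simp only: mult.left_commute mult.assoc)
  ultimately show ?thesis using r2 \<open>0 < r1\<close> by blast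
qed

lemma Khn_cubic_roots:
  assumes "3 \<le> h" and "h < n"
  shows "\<exists>r1 r2 r3. Khn_cubic n h = [:-r1, 1:] * [:-r2, 1:] * [:-r3, 1:] \<and>
           0 < r1 \<and> -1 < r2 \<and> r2 < -1/2 \<and> r3 < -2"
proof -
  have h: "3 \<le> real h" "real h + 1 \<le> real n" using assms by auto
  have "poly (Khn_cubic n h) (-2) = 3 * (real n - real h) * (real h - 2)"
    by (simp add: Khn_cubic_def algebra_simps power2_eq_square)
  then have at_minus_2: "0 < poly (Khn_cubic n h) (-2)" using h by simp
  have "poly (Khn_cubic n h) (-1) = (real n - real h) * (real h - 1)"
    by (simp add: Khn_cubic_def algebra_simps power2_eq_square)
  then have at_minus_1: "0 < poly (Khn_cubic n h) (-1)" using h by simp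
  have "poly (Khn_cubic n h) (-1/2) = 3/8 - 3 * real h / 4"
    by (simp add: Khn_cubic_def algebra_simps power2_eq_square)
  then have at_minus_half: "poly (Khn_cubic n h) (-1/2) < 0" using h by simp
  have "poly (Khn_cubic n h) 0 = - real h * (real n - real h) - 2 * real h + 2"
    by (simp add: Khn_cubic_def algebra_simps power2_eq_square)
  moreover have "0 \<le> real h * (real n - real h)" using h by simp
  ultimately have at_0: "poly (Khn_cubic n h) 0 < 0" using h by linarith
  obtain c0 c1 c2 where cubic: "Khn_cubic n h = [:c0, c1, c2, 1:]"
    unfolding Khn_cubic_def by blast
  show ?thesis
    by (rule monic_cubic_factor_by_signs[of "-2" "-1" "-1/2" c0 c1 c2, folded cubic,
          OF _ _ _ at_minus_2 at_minus_1 at_minus_half at_0]) simp_all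
qed

section \<open>The spectrum\<close>

lemma order_prod_linear_factors:
  fixes a :: "'a :: idom"
  shows "order a (\<Prod>l\<leftarrow>xs. [:-l, 1:]) = count (mset xs) a"
proof (induction xs)
  case Nil
  then show ?case by (simp add: order_0I)
next
  case (Cons l xs)
  have nonzero: "(\<Prod>l\<leftarrow>xs. [:-l, 1:]) \<noteq> 0" by (auto simp: prod_list_zero_iff)
  have "order a ([:-l, 1:] * (\<Prod>l\<leftarrow>xs. [:-l, 1:])) =
      order a [:-l, 1:] + order a (\<Prod>l\<leftarrow>xs. [:-l, 1:])"
    by (rule order_mult, rule no_zero_divisors[OF _ nonzero]) simp
  moreover have "order a [:-l, 1:] = (if a = l then 1 else 0)"
    using order_power_n_n[of l 1] by (auto intro: order_0I)
  ultimately show ?case using Cons by simp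
qed

lemma sorted_linear_factors_unique:
  fixes xs ys :: "'a :: linordered_idom list"
  assumes "sorted_wrt (\<ge>) xs" and "sorted_wrt (\<ge>) ys"
    and "(\<Prod>l\<leftarrow>xs. [:-l, 1:]) = (\<Prod>l\<leftarrow>ys. [:-l, 1:])"
  shows "xs = ys"
proof -
  have "mset xs = mset ys"
    by (rule multiset_eqI) (metis assms(3) order_prod_linear_factors)
  moreover have "sorted (rev xs)" and "sorted (rev ys)"
    using assms(1,2) by (simp_all add: sorted_wrt_rev)
  ultimately have "rev xs = rev ys"
    by (metis mset_rev properties_for_sort)
  then show ?thesis by simp
qed

definition Khn_spectrum :: "nat \<Rightarrow> nat \<Rightarrow> real \<Rightarrow> real \<Rightarrow> real \<Rightarrow> real list" where
  "Khn_spectrum n h r1 r2 r3 = [r1, r2] @ replicate (h - 2) (-1) @ replicate (n - h - 1) (-2) @ [r3]"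

lemma prod_Khn_spectrum:
  "(\<Prod>l\<leftarrow>Khn_spectrum n h r1 r2 r3. [:-l, 1:]) =
     [:1, 1:] ^ (h - 2) * [:2, 1:] ^ (n - h - 1) * ([:-r1, 1:] * [:-r2, 1:] * [:-r3, 1:])"
  unfolding Khn_spectrum_def
  by (simp only: map_append prod_list.append map_replicate prod_list_replicate list.map
      prod_list.Cons prod_list.Nil minus_minus append.simps mult_1_right ac_simps)

lemma sorted_Khn_spectrum:
  assumes "r2 \<le> r1" and "-1 \<le> r2" and "r3 \<le> -2"
  shows "sorted_wrt (\<ge>) (Khn_spectrum n h r1 r2 r3)"
proof -
  have "sorted_wrt (\<ge>) (replicate k a)" for k and a :: real
    by (induction k) auto
  then show ?thesis
    using assms by (auto simp: Khn_spectrum_def sorted_wrt_append)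
qed

lemma nth_Khn_spectrum:
  fixes r1 r2 r3 :: real
  assumes "3 \<le> h" and "h < n"
  defines "L \<equiv> Khn_spectrum n h r1 r2 r3"
  shows "L ! 0 = r1" and "L ! 1 = r2" and "L ! 2 = -1"
    and "L ! (n - 2) \<in> {-1, -2}" and "L ! (n - 1) = r3"
proof -
  show "L ! 0 = r1" "L ! 1 = r2" "L ! 2 = -1"
    using assms(1) by (auto simp: L_def Khn_spectrum_def nth_append numeral_2_eq_2)
  have "length L = n" using assms by (simp add: L_def Khn_spectrum_def)
  moreover have "L \<noteq> []" by (simp add: L_def Khn_spectrum_def)
  ultimately have "L ! (n - 1) = last L" and "L ! (n - 2) = rev L ! 1"
    using assms(1,2) rev_nth[of 1 L] by (simp_all add: last_conv_nth numeral_2_eq_2)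
  moreover have "rev L = r3 # replicate (n - h - 1) (-2) @ replicate (h - 2) (-1) @ [r2, r1]"
    by (simp add: L_def Khn_spectrum_def)
  ultimately show "L ! (n - 2) \<in> {-1, -2}" and "L ! (n - 1) = r3"
    using assms(1) by (cases "n - h - 1"; simp add: nth_append last_rev[symmetric])+
qed

theorem theorem2p5:
  fixes n h :: nat
  assumes "3 \<le> h" and "h \<le> n - 1"
  shows "dist_char_poly n (Khn_edge n h) =
           [:1, 1:] ^ (h - 2) * [:2, 1:] ^ (n - h - 1) *
           [: - real n * real h + (real h)^2 - 2 * real h + 2,
              5 - 2 * real h - 2 * real n * real h + 2 * (real h)^2 - real n,
              real h + 4 - 2 * real n,
              1 :] \<and>
         (\<forall>ls. is_dist_spectrum n (Khn_edge n h) ls \<longrightarrow>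
           ls ! 0 > 0 \<and> -1 < ls ! 1 \<and> ls ! 1 < -1/2 \<and> ls ! 2 = -1 \<and>
           ls ! (n - 2) \<in> {-1, -2} \<and> ls ! (n - 1) < -2)"
proof -
  have h: "3 \<le> h" "h < n" using assms by auto
  note char_poly = dist_char_poly_Khn[OF h]
  obtain r1 r2 r3 where cubic: "Khn_cubic n h = [:-r1, 1:] * [:-r2, 1:] * [:-r3, 1:]"
    and roots: "0 < r1" "-1 < r2" "r2 < -1/2" "r3 < -2"
    using Khn_cubic_roots[OF h] by blast
  have "dist_char_poly n (Khn_edge n h) = (\<Prod>l\<leftarrow>Khn_spectrum n h r1 r2 r3. [:-l, 1:])"
    unfolding char_poly cubic prod_Khn_spectrum ..
  moreover have "sorted_wrt (\<ge>) (Khn_spectrum n h r1 r2 r3)"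
    using roots by (intro sorted_Khn_spectrum) auto
  ultimately have spectrum: "ls = Khn_spectrum n h r1 r2 r3"
    if "is_dist_spectrum n (Khn_edge n h) ls" for ls
    using that sorted_linear_factors_unique unfolding is_dist_spectrum_def by metis
  show ?thesis
  proof (intro conjI[OF char_poly[unfolded Khn_cubic_def]] allI impI)
    fix ls assume "is_dist_spectrum n (Khn_edge n h) ls"
    then have "ls = Khn_spectrum n h r1 r2 r3" by (rule spectrum)
    with nth_Khn_spectrum[OF h, of r1 r2 r3] roots
    show "ls ! 0 > 0 \<and> -1 < ls ! 1 \<and> ls ! 1 < -1/2 \<and> ls ! 2 = -1 \<and>
          ls ! (n - 2) \<in> {-1, -2} \<and> ls ! (n - 1) < -2"
      by simp
  qed
qed

end
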